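(* Let $X\subset\overline{\mathbb{R}}$ and $Y\subset[0,1]$ be finite sets with $|Y|\le|X|+1$ and $\{0,1\}\subset Y$. Let $\mathcal{F}(X,Y)$ be the set of cumulative distribution functions with atoms in $X$ and cumulative probabilities in $Y$, i.e. nondecreasing maps $F:X\to Y$ with $F(\max X)=1$ (where $F$ corresponds to the distribution assigning probability $F(x_i)-F(x_{i-1})$ to $x_i$, with $X=\{x_1<\cdots<x_{|X|}\}$ and $F(x_0):=0$). For $F\in\mathcal{F}(X,Y)$, let $H(F)$ be the Shannon entropy of this distribution. Then $F\in\arg\max_{F'\in\mathcal{F}(X,Y)}H(F')$ if and only if $F(X)\cup\{0\}=Y$.
   Context: $\overline{\mathbb{R}}=\mathbb{R}\cup\{-\infty,+\infty,\bot\}$ with the strict linear order $-\infty<x<x'<+\infty<\bot$ for reals $x<x'$. Shannon entropy of a discrete distribution $(p_i)$ is $-\sum_i p_i\log_2 p_i$ (with $0\log_2 0=0$). *)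

theory Defs
  imports Complex_Main "HOL-Library.Extended_Real" "HOL-Library.FuncSet"
begin

text \<open>The extended real line with an extra top element Bot (written \<bottom> in the paper):
  -\<infinity> < reals < +\<infinity> < Bot.\<close>
datatype rbar = Ext ereal | Bot

instantiation rbar :: linorder
begin
fun less_eq_rbar :: "rbar \<Rightarrow> rbar \<Rightarrow> bool" where
  "less_eq_rbar (Ext a) (Ext b) = (a \<le> b)"
| "less_eq_rbar _ Bot = True"
| "less_eq_rbar Bot (Ext _) = False"
definition less_rbar :: "rbar \<Rightarrow> rbar \<Rightarrow> bool" where
  "less_rbar a b = (a \<le> b \<and> \<not> b \<le> a)"
instance
proof
  fix x y z :: rbar
  show "(x < y) = (x \<le> y \<and> \<not> y \<le> x)" by (simp add: less_rbar_def)
  show "x \<le> x" by (cases x) auto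
  show "x \<le> y \<Longrightarrow> y \<le> z \<Longrightarrow> x \<le> z" by (cases x; cases y; cases z) auto
  show "x \<le> y \<Longrightarrow> y \<le> x \<Longrightarrow> x = y" by (cases x; cases y) auto
  show "x \<le> y \<or> y \<le> x" by (cases x; cases y) auto
qed
end

definition cdfs :: "rbar set \<Rightarrow> real set \<Rightarrow> (rbar \<Rightarrow> real) set" where
  "cdfs X Y = {F \<in> X \<rightarrow>\<^sub>E Y. mono_on X F \<and> F (Max X) = 1}"

definition pmass :: "rbar set \<Rightarrow> (rbar \<Rightarrow> real) \<Rightarrow> rbar \<Rightarrow> real" where
  "pmass X F x = F x - (if {y \<in> X. y < x} = {} then 0 else F (Max {y \<in> X. y < x}))"

definition entropy :: "rbar set \<Rightarrow> (rbar \<Rightarrow> real) \<Rightarrow> real" where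
  "entropy X F = - (\<Sum>x\<in>X. (if pmass X F x = 0 then 0 else pmass X F x * log 2 (pmass X F x)))"

end

theory Submission
  imports Defs
begin

text \<open>The entropy of a CDF F depends only on its set of levels S = F(X) \<union> {0}: the nonzero
  masses are exactly the gaps between consecutive levels. Splitting a gap into two positive
  parts strictly increases entropy, because p log p + q log q < (p + q) log (p + q). Hence
  entropy is strictly increasing in S, and since every admissible S lies between {0, 1} and Y,
  the maximum is attained exactly when S = Y, which is possible because |Y| \<le> |X| + 1.\<close>

definition plogp :: "real \<Rightarrow> real" where
  "plogp p = (if p = 0 then 0 else p * log 2 p)"

definition prev_level :: "real set \<Rightarrow> real \<Rightarrow> real" where
  "prev_level S v = (if {t \<in> S. t < v} = {} then 0 else Max {t \<in> S. t < v})"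

definition neg_entropy_levels :: "real set \<Rightarrow> real" where
  "neg_entropy_levels S = (\<Sum>v\<in>S. plogp (v - prev_level S v))"

lemma plogp_add_strict:
  assumes "p > 0" "q > 0"
  shows "plogp p + plogp q < plogp (p + q)"
proof -
  have "p * log 2 p < p * log 2 (p + q)" "q * log 2 q < q * log 2 (p + q)"
    using assms by (simp_all add: mult_strict_left_mono)
  then have "p * log 2 p + q * log 2 q < (p + q) * log 2 (p + q)"
    by (simp add: distrib_right)
  then show ?thesis
    using assms unfolding plogp_def by simp
qed

subsection \<open>Refining the levels\<close>

lemma prev_level_eqI:
  assumes "finite S" "l \<in> S" "l < v" "\<And>t. t \<in> S \<Longrightarrow> t < v \<Longrightarrow> t \<le> l"
  shows "prev_level S v = l"
proof -
  have "Max {t \<in> S. t < v} = l"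
    using assms by (intro Max_eqI) auto
  then show ?thesis
    using assms(2,3) unfolding prev_level_def by auto
qed

lemma prev_level_insert:
  assumes "finite S" and "t \<in> S" "a \<le> t" "t < v"
  shows "prev_level (insert a S) v = prev_level S v"
proof -
  let ?B = "{t \<in> S. t < v}"
  have B: "finite ?B" "?B \<noteq> {}" "t \<in> ?B"
    using assms by auto
  have "{t \<in> insert a S. t < v} = insert a ?B"
    using assms by auto
  then have "prev_level (insert a S) v = Max (insert a ?B)"
    unfolding prev_level_def by simp
  also have "\<dots> = Max ?B"
    using B order_trans[OF \<open>a \<le> t\<close> Max_ge[OF B(1,3)]] by (simp add: max_def)
  also have "\<dots> = prev_level S v"
    using B unfolding prev_level_def by auto
  finally show ?thesis .
qed

lemma neg_entropy_levels_insert: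
  assumes fin: "finite S" and "a \<notin> S"
    and l: "l \<in> S" "l < a" "\<And>t. t \<in> S \<Longrightarrow> t < a \<Longrightarrow> t \<le> l"
    and u: "u \<in> S" "a < u" "\<And>t. t \<in> S \<Longrightarrow> a < t \<Longrightarrow> u \<le> t"
  shows "neg_entropy_levels (insert a S)
    = neg_entropy_levels S - plogp (u - l) + plogp (a - l) + plogp (u - a)"
proof -
  have a: "prev_level (insert a S) a = l"
    using fin l by (intro prev_level_eqI) auto
  have u_ins: "prev_level (insert a S) u = a"
    using fin u by (intro prev_level_eqI) force+
  have "t \<le> l" if "t \<in> S" "t < u" for t
    using l u that \<open>a \<notin> S\<close> by (metis linorder_neqE not_le)
  then have u_S: "prev_level S u = l"
    using fin l u by (intro prev_level_eqI) auto
  have other: "prev_level (insert a S) v = prev_level S v" if "v \<in> S" "v \<noteq> u" for v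
  proof (cases "v < a")
    case True
    then have "{t \<in> insert a S. t < v} = {t \<in> S. t < v}" by auto
    then show ?thesis unfolding prev_level_def by auto
  next
    case False
    then have "u < v"
      using u that \<open>a \<notin> S\<close> by force
    then show ?thesis
      using fin u by (intro prev_level_insert) auto
  qed
  let ?rest = "\<lambda>T. \<Sum>v\<in>S - {u}. plogp (v - prev_level T v)"
  have "neg_entropy_levels (insert a S) = plogp (a - l) + plogp (u - a) + ?rest (insert a S)"
    using fin u \<open>a \<notin> S\<close> a u_ins by (simp add: neg_entropy_levels_def sum.remove)
  moreover have "?rest (insert a S) = ?rest S"
    using other by (intro sum.cong) auto
  moreover have "neg_entropy_levels S = plogp (u - l) + ?rest S"
    using fin u u_S by (simp add: neg_entropy_levels_def sum.remove)
  ultimately show ?thesis by simp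
qed

lemma neg_entropy_levels_insert_less:
  assumes "finite S" "S \<subseteq> {0..1}" "0 \<in> S" "1 \<in> S" "a \<in> {0..1}" "a \<notin> S"
  shows "neg_entropy_levels (insert a S) < neg_entropy_levels S"
proof -
  have "0 < a" "a < 1"
    using assms by (auto simp: order.order_iff_strict)
  define l where "l = Max {t \<in> S. t < a}"
  define u where "u = Min {t \<in> S. a < t}"
  have "l \<in> {t \<in> S. t < a}"
    unfolding l_def using assms \<open>0 < a\<close> by (intro Max_in) auto
  then have l: "l \<in> S" "l < a" "\<And>t. t \<in> S \<Longrightarrow> t < a \<Longrightarrow> t \<le> l"
    using assms by (auto simp: l_def)
  have "u \<in> {t \<in> S. a < t}"
    unfolding u_def using assms \<open>a < 1\<close> by (intro Min_in) auto
  then have u: "u \<in> S" "a < u" "\<And>t. t \<in> S \<Longrightarrow> a < t \<Longrightarrow> u \<le> t"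
    using assms by (auto simp: u_def)
  have "plogp (a - l) + plogp (u - a) < plogp (u - l)"
    using plogp_add_strict[of "a - l" "u - a"] l u by simp
  then show ?thesis
    using neg_entropy_levels_insert[OF assms(1,6) l u] by simp
qed

lemma neg_entropy_levels_union_le:
  assumes "finite D" "finite S" "S \<union> D \<subseteq> {0..1}" "0 \<in> S" "1 \<in> S"
  shows "neg_entropy_levels (S \<union> D) \<le> neg_entropy_levels S"
  using assms
proof (induction D arbitrary: S rule: finite_induct)
  case empty
  then show ?case by simp
next
  case (insert a D)
  show ?case
  proof (cases "a \<in> S")
    case True
    then show ?thesis
      using insert by (simp add: insert_absorb)
  next
    case False
    have "neg_entropy_levels (insert a S \<union> D) \<le> neg_entropy_levels (insert a S)"
      using insert by (intro insert.IH) auto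
    moreover have "neg_entropy_levels (insert a S) < neg_entropy_levels S"
      using insert False by (intro neg_entropy_levels_insert_less) auto
    ultimately show ?thesis by simp
  qed
qed

lemma neg_entropy_levels_antimono:
  assumes "finite T" "S \<subseteq> T" "T \<subseteq> {0..1}" "0 \<in> S" "1 \<in> S"
  shows "neg_entropy_levels T \<le> neg_entropy_levels S"
proof -
  have "finite S"
    using assms finite_subset by blast
  then show ?thesis
    using neg_entropy_levels_union_le[of T S] assms by (simp add: sup.absorb2)
qed

lemma neg_entropy_levels_strict_antimono:
  assumes "finite T" "S \<subset> T" "T \<subseteq> {0..1}" "0 \<in> S" "1 \<in> S"
  shows "neg_entropy_levels T < neg_entropy_levels S"
proof -
  obtain a where a: "a \<in> T" "a \<notin> S"
    using assms by auto
  have "finite S"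
    using assms finite_subset by auto
  then have "neg_entropy_levels T \<le> neg_entropy_levels (insert a S)"
    using assms a by (intro neg_entropy_levels_antimono) auto
  also have "\<dots> < neg_entropy_levels S"
    using assms a \<open>finite S\<close> by (intro neg_entropy_levels_insert_less) auto
  finally show ?thesis .
qed

lemma neg_entropy_levels_insert_0:
  assumes "finite S" "S \<subseteq> {0..}"
  shows "neg_entropy_levels (insert 0 S) = neg_entropy_levels S"
proof (cases "0 \<in> S")
  case True
  then show ?thesis by (simp add: insert_absorb)
next
  case False
  then have pos: "v > 0" if "v \<in> S" for v
    using assms that by (metis atLeast_iff less_eq_real_def subsetD)
  have zero: "prev_level (insert 0 S) 0 = 0"
    unfolding prev_level_def using pos by force
  have same: "prev_level (insert 0 S) v = prev_level S v" if "v \<in> S" for v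
  proof (cases "\<exists>t \<in> S. t < v")
    case True
    then show ?thesis
      using assms pos by (metis prev_level_insert less_eq_real_def)
  next
    case False
    then have "prev_level (insert 0 S) v = 0"
      using assms pos that by (intro prev_level_eqI) auto
    then show ?thesis
      using False unfolding prev_level_def by auto
  qed
  have "(\<Sum>v\<in>S. plogp (v - prev_level (insert 0 S) v)) = neg_entropy_levels S"
    unfolding neg_entropy_levels_def using same by (intro sum.cong) auto
  then show ?thesis
    using assms False zero by (simp add: neg_entropy_levels_def plogp_def)
qed

subsection \<open>Entropy of a CDF through its levels\<close>

lemma pmass_eq_0:
  assumes mono: "mono_on X F" and "finite X" "x' \<in> X" "x \<in> X" "x' < x" "F x' = F x"
  shows "pmass X F x = 0"
proof -
  let ?B = "{y \<in> X. y < x}"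
  have B: "finite ?B" "x' \<in> ?B"
    using assms by auto
  have "Max ?B \<in> ?B"
    using B by (intro Max_in) auto
  then have m: "Max ?B \<in> X" "Max ?B < x" "x' \<le> Max ?B"
    using Max_ge[OF B] by auto
  have "F x' \<le> F (Max ?B)"
    using mono_onD[OF mono \<open>x' \<in> X\<close> m(1,3)] .
  moreover have "F (Max ?B) \<le> F x"
    using mono_onD[OF mono m(1) \<open>x \<in> X\<close>] m(2) by simp
  ultimately have "F (Max ?B) = F x"
    using \<open>F x' = F x\<close> by simp
  moreover have "?B \<noteq> {}"
    using B by blast
  ultimately show ?thesis
    unfolding pmass_def by auto
qed

lemma pmass_first_in_fiber:
  assumes mono: "mono_on X F" and "finite X" "x \<in> X"
    and first: "\<And>y. y \<in> X \<Longrightarrow> F y = F x \<Longrightarrow> x \<le> y"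
  shows "pmass X F x = F x - prev_level (F ` X) (F x)"
proof -
  have below: "y < x" if "y \<in> X" "F y < F x" for y
    using mono_onD[OF mono \<open>x \<in> X\<close> that(1)] that by (meson not_le not_less)
  show ?thesis
  proof (cases "{y \<in> X. y < x} = {}")
    case True
    then have "{t \<in> F ` X. t < F x} = {}"
      using below by auto
    then show ?thesis
      using True unfolding pmass_def prev_level_def by simp
  next
    case False
    define m where "m = Max {y \<in> X. y < x}"
    have m: "m \<in> X" "m < x" "\<And>y. y \<in> X \<Longrightarrow> y < x \<Longrightarrow> y \<le> m"
      using False assms Max_in[of "{y \<in> X. y < x}"] by (auto simp: m_def)
    have "F m < F x"
      using mono_onD[OF mono m(1) \<open>x \<in> X\<close>] m first by force
    then have "prev_level (F ` X) (F x) = F m"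
      using m assms below by (intro prev_level_eqI) (auto intro: mono_onD[OF mono])
    then show ?thesis
      using False unfolding pmass_def m_def by auto
  qed
qed

lemma sum_plogp_pmass:
  assumes "finite X" "mono_on X F"
  shows "(\<Sum>x\<in>X. plogp (pmass X F x)) = neg_entropy_levels (F ` X)"
proof -
  have fiber: "(\<Sum>x\<in>{x \<in> X. F x = v}. plogp (pmass X F x)) = plogp (v - prev_level (F ` X) v)"
    if "v \<in> F ` X" for v
  proof -
    define A where "A = {x \<in> X. F x = v}"
    have A: "finite A" "A \<noteq> {}"
      using assms that by (auto simp: A_def)
    define x where "x = Min A"
    have x: "x \<in> A" "\<And>y. y \<in> A \<Longrightarrow> x \<le> y"
      using A by (auto simp: x_def)
    have "pmass X F y = 0" if "y \<in> A - {x}" for y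
      using x that assms by (intro pmass_eq_0[of X F x]) (auto simp: A_def order.order_iff_strict)
    then have "(\<Sum>y\<in>A. plogp (pmass X F y)) = plogp (pmass X F x)"
      using A x by (simp add: sum.remove plogp_def)
    also have "pmass X F x = v - prev_level (F ` X) v"
      using x assms by (subst pmass_first_in_fiber) (auto simp: A_def)
    finally show ?thesis by (simp add: A_def)
  qed
  have "(\<Sum>x\<in>X. plogp (pmass X F x))
      = (\<Sum>v\<in>F ` X. \<Sum>x\<in>{x \<in> X. F x = v}. plogp (pmass X F x))"
    using assms(1) by (rule sum.image_gen)
  also have "\<dots> = neg_entropy_levels (F ` X)"
    unfolding neg_entropy_levels_def using fiber by (rule sum.cong[OF refl])
  finally show ?thesis .
qed

lemma entropy_eq_neg_entropy_levels:
  assumes "finite X" "Y \<subseteq> {0..1}" "F \<in> cdfs X Y"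
  shows "entropy X F = - neg_entropy_levels (insert 0 (F ` X))"
proof -
  have F: "mono_on X F" "F ` X \<subseteq> {0..1}"
    using assms by (auto simp: cdfs_def)
  have "entropy X F = - (\<Sum>x\<in>X. plogp (pmass X F x))"
    unfolding entropy_def plogp_def by simp
  also have "\<dots> = - neg_entropy_levels (F ` X)"
    using sum_plogp_pmass assms F by simp
  also have "\<dots> = - neg_entropy_levels (insert 0 (F ` X))"
    using F assms by (subst neg_entropy_levels_insert_0) auto
  finally show ?thesis .
qed

lemma levels_of_cdf:
  assumes "F \<in> cdfs X Y" "X \<noteq> {}" "finite X" "0 \<in> Y"
  shows "insert 0 (F ` X) \<subseteq> Y" "1 \<in> F ` X"
proof -
  have "Max X \<in> X"
    using assms by simp
  moreover have "F (Max X) = 1"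
    using assms by (simp add: cdfs_def)
  ultimately show "1 \<in> F ` X"
    by (metis image_eqI)
  show "insert 0 (F ` X) \<subseteq> Y"
    using assms by (auto simp: cdfs_def)
qed

subsection \<open>A CDF with all prescribed levels\<close>

lemma card_less_strict_mono:
  fixes X :: "'a::linorder set"
  assumes "finite X" "x \<in> X" "x < y"
  shows "card {z \<in> X. z < x} < card {z \<in> X. z < y}"
  using assms by (intro psubset_card_mono) auto

lemma bij_betw_card_less:
  fixes X :: "'a::linorder set"
  assumes "finite X"
  shows "bij_betw (\<lambda>x. card {z \<in> X. z < x}) X {..<card X}"
proof -
  let ?r = "\<lambda>x. card {z \<in> X. z < x}"
  have inj: "inj_on ?r X"
  proof (rule inj_onI)
    fix x y assume "x \<in> X" "y \<in> X" "?r x = ?r y"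
    then show "x = y"
      by (cases x y rule: linorder_cases) (auto dest: card_less_strict_mono[OF assms])
  qed
  have "?r x < card X" if "x \<in> X" for x
  proof (rule psubset_card_mono[OF assms])
    show "{z \<in> X. z < x} \<subset> X"
      using that by auto
  qed
  then have "?r ` X \<subseteq> {..<card X}"
    by auto
  moreover have "card (?r ` X) = card {..<card X}"
    using card_image[OF inj] by simp
  ultimately have "?r ` X = {..<card X}"
    by (intro card_subset_eq) auto
  then show ?thesis
    using inj by (simp add: bij_betw_def)
qed

text \<open>The k-th smallest element of X is sent to the min(k, |Z| - 1)-th smallest element of Z.\<close>
lemma ex_mono_on_onto:
  fixes X :: "'a::linorder set" and Z :: "'b::linorder set"
  assumes "finite X" "finite Z" "Z \<noteq> {}" "card Z \<le> card X"
  shows "\<exists>g. mono_on X g \<and> g ` X = Z"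
proof -
  define zs where "zs = sorted_list_of_set Z"
  define r where "r x = card {z \<in> X. z < x}" for x
  define g where "g x = zs ! min (r x) (card Z - 1)" for x
  have zs: "set zs = Z" "sorted zs" "length zs = card Z" "card Z > 0"
    using assms by (auto simp: zs_def card_gt_0_iff)
  have "mono_on X g"
  proof (rule mono_onI)
    fix x y :: 'a assume "x \<le> y"
    then have "r x \<le> r y"
      unfolding r_def using assms(1) by (intro card_mono) auto
    then show "g x \<le> g y"
      unfolding g_def using zs by (intro sorted_nth_mono) auto
  qed
  moreover have "g ` X = Z"
  proof
    have "zs ! i \<in> Z" if "i < card Z" for i
      using that zs nth_mem by metis
    then show "g ` X \<subseteq> Z"
      using zs(4) by (auto simp: g_def)
    show "Z \<subseteq> g ` X"
    proof
      fix z assume "z \<in> Z"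
      then obtain j where j: "j < card Z" "zs ! j = z"
        using zs by (metis in_set_conv_nth)
      then have "j \<in> r ` X"
        using bij_betw_imp_surj_on[OF bij_betw_card_less[OF assms(1)]] assms(4)
        by (simp add: r_def)
      then obtain x where "x \<in> X" "r x = j"
        by blast
      moreover have "g x = z"
        using j \<open>r x = j\<close> by (simp add: g_def)
      ultimately show "z \<in> g ` X"
        by blast
    qed
  qed
  ultimately show ?thesis
    by blast
qed

lemma ex_cdf_with_levels:
  assumes "finite X" "X \<noteq> {}" "finite Y" "Y \<subseteq> {0..1}" "{0, 1} \<subseteq> Y"
    and "card Y \<le> card X + 1"
  shows "\<exists>F \<in> cdfs X Y. insert 0 (F ` X) = Y"
proof -
  have "card (Y - {0}) \<le> card X" "Y - {0} \<noteq> {}"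
    using assms by auto
  then obtain g where g: "mono_on X g" "g ` X = Y - {0}"
    using ex_mono_on_onto[of X "Y - {0}"] assms by blast
  define F where "F = restrict g X"
  have F: "mono_on X F" "F ` X = Y - {0}"
    using g by (auto simp: F_def mono_on_def)
  have "1 \<in> F ` X"
    using F assms by auto
  then obtain x where "x \<in> X" "F x = 1"
    by auto
  have "Max X \<in> X"
    using assms by simp
  then have "F (Max X) \<in> Y"
    using F(2) by blast
  then have "F (Max X) \<le> 1"
    using assms(4) by auto
  moreover have "1 \<le> F (Max X)"
    using mono_onD[OF F(1) \<open>x \<in> X\<close> \<open>Max X \<in> X\<close>] \<open>x \<in> X\<close> \<open>F x = 1\<close> assms(1) by simp
  moreover have "F \<in> X \<rightarrow>\<^sub>E Y"
    using g unfolding F_def by (auto simp: restrict_PiE_iff)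
  ultimately have "F \<in> cdfs X Y"
    using F(1) unfolding cdfs_def by simp
  moreover have "insert 0 (F ` X) = Y"
    using F(2) assms(5) by auto
  ultimately show ?thesis
    by blast
qed

lemma entropy_cdf_le:
  assumes "finite X" "X \<noteq> {}" "finite Y" "Y \<subseteq> {0..1}" "0 \<in> Y" "F \<in> cdfs X Y"
  shows "entropy X F \<le> - neg_entropy_levels Y"
    and "entropy X F = - neg_entropy_levels Y \<longleftrightarrow> insert 0 (F ` X) = Y"
proof -
  have levels: "insert 0 (F ` X) \<subseteq> Y" "1 \<in> F ` X"
    using levels_of_cdf assms by auto
  have entropy: "entropy X F = - neg_entropy_levels (insert 0 (F ` X))"
    using entropy_eq_neg_entropy_levels assms by blast
  show "entropy X F \<le> - neg_entropy_levels Y"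
    using levels assms entropy by (simp add: neg_entropy_levels_antimono)
  have "entropy X F < - neg_entropy_levels Y" if "insert 0 (F ` X) \<noteq> Y"
    using levels assms that entropy by (simp add: neg_entropy_levels_strict_antimono psubsetI)
  then show "entropy X F = - neg_entropy_levels Y \<longleftrightarrow> insert 0 (F ` X) = Y"
    using entropy by force
qed

theorem theoremD2:
  fixes X :: "rbar set" and Y :: "real set" and F :: "rbar \<Rightarrow> real"
  assumes "finite X" and "finite Y" and "Y \<subseteq> {0..1}"
    and "card Y \<le> card X + 1" and "{0, 1} \<subseteq> Y"
    and "F \<in> cdfs X Y"
  shows "(\<forall>F' \<in> cdfs X Y. entropy X F' \<le> entropy X F) \<longleftrightarrow> F ` X \<union> {0} = Y"
proof -
  have "card {0::real, 1} \<le> card Y"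
    using assms by (intro card_mono) auto
  then have "X \<noteq> {}"
    using assms by auto
  note bound = entropy_cdf_le[OF assms(1) \<open>X \<noteq> {}\<close> assms(2,3)]
  obtain F\<^sub>Y where F\<^sub>Y: "F\<^sub>Y \<in> cdfs X Y" "insert 0 (F\<^sub>Y ` X) = Y"
    using ex_cdf_with_levels[OF assms(1) \<open>X \<noteq> {}\<close> assms(2,3,5,4)] by blast
  have "entropy X F\<^sub>Y = - neg_entropy_levels Y"
    using bound(2) F\<^sub>Y assms(5) by simp
  then have "(\<forall>F' \<in> cdfs X Y. entropy X F' \<le> entropy X F) \<longleftrightarrow> entropy X F = - neg_entropy_levels Y"
    using bound(1) assms(5,6) F\<^sub>Y(1) by (metis antisym insert_subset)
  also have "\<dots> \<longleftrightarrow> F ` X \<union> {0} = Y"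
    using bound(2) assms(5,6) by simp
  finally show ?thesis .
qed

end
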